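(* Consider a sequence of populations with $|\mathcal{I}|\to\infty$, each consisting of a set $\mathcal{I}$ of independent accounts and a dependent block $\mathcal{D}$, with real random variables $X_i$ having finite fourth moments and variances $\sigma_i^2>0$, the $X_i$ ($i\in\mathcal{I}$) mutually independent and independent of $(X_i)_{i\in\mathcal{D}}$. Let $X_{\mathcal{D}}=\sum_{i\in\mathcal{D}}X_i$ with variance $\sigma^2_{\mathcal{D}}>0$ and kurtosis $\kappa_{\mathcal{D}}$, $X_{\mathcal{I}}=\sum_{i\in\mathcal{I}}X_i$, $X=X_{\mathcal{D}}+X_{\mathcal{I}}$. Simulated realisations: for $i\in\mathcal{I}$, $R_i$ i.i.d. copies $X_i^{(k)}$ of $X_i$; for the block, $R_{\mathcal{D}}\ge2$ i.i.d. copies of $(X_i)_{i\in\mathcal{D}}$ with totals $X_{\mathcal{D}}^{(k)}$; all simulations mutually independent and independent of $(X_i)_i$. Let $\bar X_i,\bar X_{\mathcal{D}}$ be sample means, $\hat\mu=\bar X_{\mathcal{D}}+\sum_{i\in\mathcal{I}}\bar X_i$, $\hat\sigma_i^2$ and $\hat\sigma_{\mathcal{D}}^2$ the (unbiased, divisor $R-1$) sample variances of the realisations, and $\hat\sigma^2_{(X-\hat\mu)}=\hat\sigma^2_{\mathcal{D}}(1+1/R_{\mathcal{D}})+\sum_{i\in\mathcal{I}}\hat\sigma_i^2(1+1/R_i)$; let $\sigma^2_{(X-\hat\mu)}=\operatorname{Var}(X-\hat\mu)$. With $\bar\sigma^2=\frac1{|\mathcal{I}|}\sum_{i\in\mathcal{I}}\sigma_i^2$,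 $\gamma^2=(\frac1{|\mathcal{I}|}\sum_{i\in\mathcal{I}}\sigma_i^4-\bar\sigma^4)/\bar\sigma^4$ and $\kappa_i$ the kurtosis of $X_i$, assume (R1) $R_i\ge2$ for all $i\in\mathcal{I}$, fixed integers; (R2) $\kappa_i\le\kappa_{\max}$ for all $i\in\mathcal{I}$ with $\kappa_{\max}$ independent of $|\mathcal{I}|$; (R3) $\gamma^2$ bounded as $|\mathcal{I}|\to\infty$. Assume further that either $\sigma^4_{\mathcal{D}}(\kappa_{\mathcal{D}}+1)=o(\bar\sigma^4|\mathcal{I}|^2)$, or $\sigma^4_{\mathcal{D}}(\kappa_{\mathcal{D}}+1)=O(\bar\sigma^4|\mathcal{I}|^2)$ and $R_{\mathcal{D}}\to\infty$. Then $\hat\sigma^2_{(X-\hat\mu)}$ is unbiased for $\sigma^2_{(X-\hat\mu)}$ and relatively consistent: $\hat\sigma^2_{(X-\hat\mu)}/\sigma^2_{(X-\hat\mu)}\to1$ in probability as $|\mathcal{I}|\to\infty$.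
   Context: Kurtosis of $Y$ with variance $s^2$ is $\operatorname{E}[(Y-\operatorname{E}Y)^4]/s^4$. $f=O(g)$: $f/g$ eventually bounded; $f=o(g)$: $f/g\to0$. *)

theory Defs
  imports "HOL-Probability.Probability" "HOL-Library.Landau_Symbols"
begin

definition mean :: "'a measure \<Rightarrow> ('a \<Rightarrow> real) \<Rightarrow> real" where
  "mean M Y = integral\<^sup>L M Y"

definition var :: "'a measure \<Rightarrow> ('a \<Rightarrow> real) \<Rightarrow> real" where
  "var M Y = integral\<^sup>L M (\<lambda>\<omega>. (Y \<omega> - mean M Y)^2)"

definition kurt :: "'a measure \<Rightarrow> ('a \<Rightarrow> real) \<Rightarrow> real" where
  "kurt M Y = integral\<^sup>L M (\<lambda>\<omega>. (Y \<omega> - mean M Y)^4) / (var M Y)^2"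

definition sample_mean :: "nat \<Rightarrow> (nat \<Rightarrow> 'a \<Rightarrow> real) \<Rightarrow> 'a \<Rightarrow> real" where
  "sample_mean R f \<omega> = (\<Sum>k<R. f k \<omega>) / real R"

definition sample_var :: "nat \<Rightarrow> (nat \<Rightarrow> 'a \<Rightarrow> real) \<Rightarrow> 'a \<Rightarrow> real" where
  "sample_var R f \<omega> = (\<Sum>k<R. (f k \<omega> - sample_mean R f \<omega>)^2) / (real R - 1)"

text \<open>I: independent accounts, D: dependent block, X i: the original variables,
  Xs i k: k-th simulated copy of X i (i in I), XsD k j: coordinate j of the k-th
  simulated copy of the block (X j) (j in D), R i / RD: numbers of realisations.\<close>

definition XD_tot :: "nat set \<Rightarrow> (nat \<Rightarrow> 'a \<Rightarrow> real) \<Rightarrow> 'a \<Rightarrow> real" where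
  "XD_tot D X \<omega> = (\<Sum>j\<in>D. X j \<omega>)"

definition X_tot :: "nat set \<Rightarrow> nat set \<Rightarrow> (nat \<Rightarrow> 'a \<Rightarrow> real) \<Rightarrow> 'a \<Rightarrow> real" where
  "X_tot I D X \<omega> = XD_tot D X \<omega> + (\<Sum>i\<in>I. X i \<omega>)"

definition mu_hat ::
  "nat set \<Rightarrow> nat set \<Rightarrow> (nat \<Rightarrow> nat) \<Rightarrow> nat \<Rightarrow> (nat \<Rightarrow> nat \<Rightarrow> 'a \<Rightarrow> real)
   \<Rightarrow> (nat \<Rightarrow> nat \<Rightarrow> 'a \<Rightarrow> real) \<Rightarrow> 'a \<Rightarrow> real" where
  "mu_hat I D R RD Xs XsD \<omega> =
     sample_mean RD (\<lambda>k. XD_tot D (XsD k)) \<omega> + (\<Sum>i\<in>I. sample_mean (R i) (Xs i) \<omega>)"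

definition sigma2_hat ::
  "nat set \<Rightarrow> nat set \<Rightarrow> (nat \<Rightarrow> nat) \<Rightarrow> nat \<Rightarrow> (nat \<Rightarrow> nat \<Rightarrow> 'a \<Rightarrow> real)
   \<Rightarrow> (nat \<Rightarrow> nat \<Rightarrow> 'a \<Rightarrow> real) \<Rightarrow> 'a \<Rightarrow> real" where
  "sigma2_hat I D R RD Xs XsD \<omega> =
     sample_var RD (\<lambda>k. XD_tot D (XsD k)) \<omega> * (1 + 1 / real RD)
     + (\<Sum>i\<in>I. sample_var (R i) (Xs i) \<omega> * (1 + 1 / real (R i)))"

definition sigma_bar2 :: "'a measure \<Rightarrow> nat set \<Rightarrow> (nat \<Rightarrow> 'a \<Rightarrow> real) \<Rightarrow> real" where
  "sigma_bar2 M I X = (\<Sum>i\<in>I. var M (X i)) / real (card I)"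

definition gamma2 :: "'a measure \<Rightarrow> nat set \<Rightarrow> (nat \<Rightarrow> 'a \<Rightarrow> real) \<Rightarrow> real" where
  "gamma2 M I X =
     ((\<Sum>i\<in>I. (var M (X i))^2) / real (card I) - (sigma_bar2 M I X)^2) / (sigma_bar2 M I X)^2"

text \<open>The independent components: each original X i (i in I), the original block
  (X j)_{j in D}, each simulated X i copy, each simulated block copy.  Each is viewed
  as a random vector indexed by its coordinate set.\<close>

datatype comp = OrigInd nat | OrigBlock | SimInd nat nat | SimBlock nat

definition comps :: "nat set \<Rightarrow> (nat \<Rightarrow> nat) \<Rightarrow> nat \<Rightarrow> comp set" where
  "comps I R RD = OrigInd ` I \<union> {OrigBlock} \<union> {SimInd i k | i k. i \<in> I \<and> k < R i}
                   \<union> SimBlock ` {..<RD}"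

definition coords :: "nat set \<Rightarrow> comp \<Rightarrow> nat set" where
  "coords D c = (case c of OrigInd i \<Rightarrow> {i} | OrigBlock \<Rightarrow> D | SimInd i k \<Rightarrow> {i}
                  | SimBlock k \<Rightarrow> D)"

definition compvar ::
  "nat set \<Rightarrow> (nat \<Rightarrow> 'a \<Rightarrow> real) \<Rightarrow> (nat \<Rightarrow> nat \<Rightarrow> 'a \<Rightarrow> real) \<Rightarrow> (nat \<Rightarrow> nat \<Rightarrow> 'a \<Rightarrow> real)
   \<Rightarrow> comp \<Rightarrow> 'a \<Rightarrow> (nat \<Rightarrow> real)" where
  "compvar D X Xs XsD c \<omega> = (case c of
       OrigInd i \<Rightarrow> restrict (\<lambda>j. X j \<omega>) {i}
     | OrigBlock \<Rightarrow> restrict (\<lambda>j. X j \<omega>) D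
     | SimInd i k \<Rightarrow> restrict (\<lambda>j. Xs i k \<omega>) {i}
     | SimBlock k \<Rightarrow> restrict (\<lambda>j. XsD k j \<omega>) D)"

end

theory Submission
  imports Defs
begin

(* Group the summands of X - mu_hat into one group per account i and one group for the
   dependent block: the error of a group is its original variable minus the mean of its R_g
   simulated copies.  These group errors are centred and independent, so
   Var(X - mu_hat) = sum_g sigma_g^2 (1 + 1/R_g), and the same sum is the expectation of
   sigma2_hat because each sample variance is unbiased.  Independence across groups also makes
   the variance of sigma2_hat additive, with group g contributing at most
   9 (mu4_g + sigma_g^4) / R_g.  By (R2) and (R3) the accounts contribute O(|I| sigma_bar^4),
   the block contributes O(sigma_D^4 (kappa_D + 1) / R_D), and Var(X - mu_hat) >= |I| sigma_bar^2;
   Chebyshev's inequality then yields relative consistency. *)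

section \<open>Square- and fourth-power integrable random variables\<close>

lemma square_add_le: "((a::real) + b)^2 \<le> 2 * a^2 + 2 * b^2"
proof -
  have "2 * a^2 + 2 * b^2 - (a + b)^2 = (a - b)^2" by (simp add: power2_eq_square algebra_simps)
  then show ?thesis using zero_le_power2[of "a - b"] by linarith
qed

lemma power4_add_le: "((a::real) + b)^4 \<le> 8 * a^4 + 8 * b^4"
proof -
  have "(a + b)^4 = ((a + b)^2)^2" by simp
  also have "\<dots> \<le> (2 * a^2 + 2 * b^2)^2" using square_add_le[of a b] by (intro power_mono) auto
  also have "\<dots> = 4 * (a^2 + b^2)^2" by (simp add: power2_eq_square algebra_simps)
  also have "\<dots> \<le> 8 * a^4 + 8 * b^4" using square_add_le[of "a^2" "b^2"] by (simp add: power_mult[symmetric])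
  finally show ?thesis .
qed

lemma square_mult_le: "((a::real) * b)^2 \<le> a^4 + b^4"
proof -
  have "a^4 + b^4 - (a * b)^2 = (a^2 - b^2)^2 + (a * b)^2"
    by (simp add: power2_eq_square power4_eq_xxxx algebra_simps)
  then show ?thesis using zero_le_power2[of "a^2 - b^2"] zero_le_power2[of "a * b"] by linarith
qed

lemma abs_mult_le_sum_squares: "\<bar>(a::real) * b\<bar> \<le> a^2 + b^2"
proof -
  have "a^2 + b^2 - 2 * \<bar>a * b\<bar> = (\<bar>a\<bar> - \<bar>b\<bar>)^2" by (simp add: power2_eq_square algebra_simps abs_mult)
  then show ?thesis using zero_le_power2[of "\<bar>a\<bar> - \<bar>b\<bar>"] abs_ge_zero[of "a * b"] by linarith
qed

lemma integrable_abs_dominated: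
  fixes f g :: "'a \<Rightarrow> real"
  assumes "integrable M f" "g \<in> borel_measurable M" "\<And>x. \<bar>g x\<bar> \<le> f x"
  shows "integrable M g"
  using assms(1,2) by (rule Bochner_Integration.integrable_bound)
    (auto intro!: always_eventually order_trans[OF assms(3) abs_ge_self])

context prob_space
begin

definition L2 :: "('a \<Rightarrow> real) \<Rightarrow> bool" where
  "L2 f \<longleftrightarrow> f \<in> borel_measurable M \<and> integrable M (\<lambda>\<omega>. f \<omega> ^ 2)"

definition L4 :: "('a \<Rightarrow> real) \<Rightarrow> bool" where
  "L4 f \<longleftrightarrow> f \<in> borel_measurable M \<and> integrable M (\<lambda>\<omega>. f \<omega> ^ 4)"

lemma L2_const: "L2 (\<lambda>_. c)"
  by (simp add: L2_def)

lemma L4_const: "L4 (\<lambda>_. c)"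
  by (simp add: L4_def)

lemma L2_cmult: "L2 f \<Longrightarrow> L2 (\<lambda>\<omega>. c * f \<omega>)"
  by (simp add: L2_def power_mult_distrib borel_measurable_times)

lemma L4_cmult: "L4 f \<Longrightarrow> L4 (\<lambda>\<omega>. c * f \<omega>)"
  by (simp add: L4_def power_mult_distrib borel_measurable_times)

lemma L2_add:
  assumes "L2 f" "L2 g"
  shows "L2 (\<lambda>\<omega>. f \<omega> + g \<omega>)"
proof -
  have [measurable]: "f \<in> borel_measurable M" "g \<in> borel_measurable M"
    using assms by (auto simp: L2_def)
  have "integrable M (\<lambda>\<omega>. 2 * (f \<omega> ^ 2 + g \<omega> ^ 2))"
    using assms by (auto simp: L2_def)
  then have "integrable M (\<lambda>\<omega>. (f \<omega> + g \<omega>) ^ 2)"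
    by (rule integrable_abs_dominated) (auto simp: square_add_le)
  then show ?thesis by (simp add: L2_def)
qed

lemma L4_add:
  assumes "L4 f" "L4 g"
  shows "L4 (\<lambda>\<omega>. f \<omega> + g \<omega>)"
proof -
  have [measurable]: "f \<in> borel_measurable M" "g \<in> borel_measurable M"
    using assms by (auto simp: L4_def)
  have "integrable M (\<lambda>\<omega>. 8 * (f \<omega> ^ 4 + g \<omega> ^ 4))"
    using assms by (auto simp: L4_def)
  then have "integrable M (\<lambda>\<omega>. (f \<omega> + g \<omega>) ^ 4)"
    by (rule integrable_abs_dominated) (auto simp: power4_add_le)
  then show ?thesis by (simp add: L4_def)
qed

lemma L2_diff: "L2 f \<Longrightarrow> L2 g \<Longrightarrow> L2 (\<lambda>\<omega>. f \<omega> - g \<omega>)"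
  using L2_add[of f "\<lambda>\<omega>. -1 * g \<omega>"] L2_cmult[of g "-1"] by simp

lemma L4_diff: "L4 f \<Longrightarrow> L4 g \<Longrightarrow> L4 (\<lambda>\<omega>. f \<omega> - g \<omega>)"
  using L4_add[of f "\<lambda>\<omega>. -1 * g \<omega>"] L4_cmult[of g "-1"] by simp

lemma L2_sum: "finite A \<Longrightarrow> (\<And>i. i \<in> A \<Longrightarrow> L2 (f i)) \<Longrightarrow> L2 (\<lambda>\<omega>. \<Sum>i\<in>A. f i \<omega>)"
  by (induction A rule: finite_induct) (auto intro!: L2_add L2_const)

lemma L4_sum: "finite A \<Longrightarrow> (\<And>i. i \<in> A \<Longrightarrow> L4 (f i)) \<Longrightarrow> L4 (\<lambda>\<omega>. \<Sum>i\<in>A. f i \<omega>)"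
  by (induction A rule: finite_induct) (auto intro!: L4_add L4_const)

lemma L2_mult:
  assumes "L4 f" "L4 g"
  shows "L2 (\<lambda>\<omega>. f \<omega> * g \<omega>)"
proof -
  have [measurable]: "f \<in> borel_measurable M" "g \<in> borel_measurable M"
    using assms by (auto simp: L4_def)
  have "integrable M (\<lambda>\<omega>. f \<omega> ^ 4 + g \<omega> ^ 4)"
    using assms by (auto simp: L4_def)
  then have "integrable M (\<lambda>\<omega>. (f \<omega> * g \<omega>) ^ 2)"
    by (rule integrable_abs_dominated) (auto simp: square_mult_le)
  then show ?thesis by (simp add: L2_def)
qed

lemma L4_imp_L2: "L4 f \<Longrightarrow> L2 f"
  using L2_mult[of f "\<lambda>_. 1"] by (simp add: L4_const)

lemma L2_square: "L4 f \<Longrightarrow> L2 (\<lambda>\<omega>. (f \<omega>)^2)"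
  using L2_mult[of f f] by (simp add: power2_eq_square)

lemma integrable_L2: "L2 f \<Longrightarrow> integrable M f"
  unfolding L2_def by (auto intro: square_integrable_imp_integrable)

lemma integrable_mult_L2:
  assumes "L2 f" "L2 g"
  shows "integrable M (\<lambda>\<omega>. f \<omega> * g \<omega>)"
proof -
  have [measurable]: "f \<in> borel_measurable M" "g \<in> borel_measurable M"
    using assms by (auto simp: L2_def)
  have "integrable M (\<lambda>\<omega>. f \<omega> ^ 2 + g \<omega> ^ 2)"
    using assms by (auto simp: L2_def)
  then show ?thesis
    by (rule integrable_abs_dominated) (auto simp: abs_mult_le_sum_squares)
qed

lemma expectation_square_sum_orthogonal:
  assumes "finite A" "\<And>i. i \<in> A \<Longrightarrow> L2 (V i)"
    and "\<And>i j. i \<in> A \<Longrightarrow> j \<in> A \<Longrightarrow> i \<noteq> j \<Longrightarrow> expectation (\<lambda>\<omega>. V i \<omega> * V j \<omega>) = 0"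
  shows "expectation (\<lambda>\<omega>. (\<Sum>i\<in>A. V i \<omega>)^2) = (\<Sum>i\<in>A. expectation (\<lambda>\<omega>. (V i \<omega>)^2))"
proof -
  have "expectation (\<lambda>\<omega>. (\<Sum>i\<in>A. V i \<omega>)^2)
      = expectation (\<lambda>\<omega>. \<Sum>i\<in>A. \<Sum>j\<in>A. V i \<omega> * V j \<omega>)"
    by (simp add: power2_eq_square sum_product)
  also have "\<dots> = (\<Sum>i\<in>A. \<Sum>j\<in>A. expectation (\<lambda>\<omega>. V i \<omega> * V j \<omega>))"
    using assms by (simp add: Bochner_Integration.integral_sum integrable_mult_L2)
  also have "\<dots> = (\<Sum>i\<in>A. \<Sum>j\<in>A. if j = i then expectation (\<lambda>\<omega>. (V i \<omega>)^2) else 0)"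
    using assms by (intro sum.cong refl) (auto simp: power2_eq_square)
  also have "\<dots> = (\<Sum>i\<in>A. expectation (\<lambda>\<omega>. (V i \<omega>)^2))"
    using assms(1) by (simp add: sum.delta)
  finally show ?thesis .
qed

lemma prob_relative_deviation_le:
  assumes [measurable]: "random_variable borel Y" and "integrable M (\<lambda>\<omega>. (Y \<omega>)^2)"
    and "expectation Y = v" "v > 0" "e > 0"
  shows "prob {\<omega> \<in> space M. \<bar>Y \<omega> / v - 1\<bar> > e} \<le> variance Y / (e * v)^2"
proof -
  have "{\<omega> \<in> space M. \<bar>Y \<omega> / v - 1\<bar> > e} \<subseteq> {\<omega> \<in> space M. \<bar>Y \<omega> - expectation Y\<bar> \<ge> e * v}"
  proof safe
    fix \<omega> assume "\<bar>Y \<omega> / v - 1\<bar> > e"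
    moreover have "\<bar>Y \<omega> - v\<bar> = v * \<bar>Y \<omega> / v - 1\<bar>"
      using \<open>v > 0\<close> by (simp add: abs_mult[symmetric] field_simps)
    ultimately show "e * v \<le> \<bar>Y \<omega> - expectation Y\<bar>"
      using assms(3,4) by (simp add: mult.commute)
  qed
  then have "prob {\<omega> \<in> space M. \<bar>Y \<omega> / v - 1\<bar> > e}
      \<le> prob {\<omega> \<in> space M. \<bar>Y \<omega> - expectation Y\<bar> \<ge> e * v}"
    by (intro finite_measure_mono) measurable
  also have "\<dots> \<le> variance Y / (e * v)^2"
    using assms by (intro Chebyshev_inequality) auto
  finally show ?thesis .
qed

end

section \<open>Moments of the sample variance\<close>

lemma sum_square_dev_mean_eq:
  fixes a :: "nat \<Rightarrow> real"
  assumes "R > 0"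
  shows "(\<Sum>k<R. (a k - (\<Sum>l<R. a l) / real R)^2)
       = (\<Sum>k<R. (a k - c)^2) - (\<Sum>k<R. a k - c)^2 / real R"
proof -
  define z where "z k = a k - c" for k
  define zbar where "zbar = (\<Sum>l<R. z l) / real R"
  have R: "real R \<noteq> 0" using assms by simp
  have "(\<Sum>l<R. a l) / real R = zbar + c"
    using R by (simp add: zbar_def z_def sum_subtractf field_simps)
  then have "(\<Sum>k<R. (a k - (\<Sum>l<R. a l) / real R)^2) = (\<Sum>k<R. (z k - zbar)^2)"
    by (simp add: z_def algebra_simps)
  also have "\<dots> = (\<Sum>k<R. (z k)^2) - 2 * zbar * (\<Sum>k<R. z k) + real R * zbar^2"
    by (simp add: power2_diff sum.distrib sum_subtractf sum_distrib_left mult_ac)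
  also have "\<dots> = (\<Sum>k<R. (z k)^2) - (\<Sum>k<R. z k)^2 / real R"
    using R by (simp add: zbar_def power2_eq_square field_simps)
  finally show ?thesis by (simp add: z_def)
qed

lemma sample_var_shift:
  assumes "R > 0"
  shows "sample_var R Y \<omega>
       = ((\<Sum>k<R. (Y k \<omega> - c)^2) - (\<Sum>k<R. Y k \<omega> - c)^2 / real R) / (real R - 1)"
  unfolding sample_var_def sample_mean_def
  using sum_square_dev_mean_eq[OF assms, of "\<lambda>k. Y k \<omega>" c] by simp

lemma sample_var_nonneg: "R \<ge> 2 \<Longrightarrow> sample_var R Y \<omega> \<ge> 0"
  unfolding sample_var_def by (auto intro!: divide_nonneg_nonneg sum_nonneg)

lemma sample_var_le_shift:
  assumes "R \<ge> 2"
  shows "sample_var R Y \<omega> \<le> (\<Sum>k<R. (Y k \<omega> - c)^2) / (real R - 1)"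
  using assms by (simp add: sample_var_shift[of R Y \<omega> c] divide_right_mono)

lemma sample_var_cong:
  "(\<And>k. k < R \<Longrightarrow> Y k \<omega> = Y' k \<omega>') \<Longrightarrow> sample_var R Y \<omega> = sample_var R Y' \<omega>'"
proof -
  assume eq: "\<And>k. k < R \<Longrightarrow> Y k \<omega> = Y' k \<omega>'"
  then have "(\<Sum>k<R. Y k \<omega>) = (\<Sum>k<R. Y' k \<omega>')" by (intro sum.cong) auto
  then show ?thesis
    unfolding sample_var_def sample_mean_def using eq by (intro arg_cong2[where f="(/)"] sum.cong) auto
qed

lemma inflated_sample_var_excess_le:
  fixes r q s m :: real
  assumes r: "r \<ge> 2" and q: "q \<ge> 0" and m: "m \<le> (r * q + r * (r - 1) * s^2) / (r - 1)^2"
  shows "(1 + 1 / r)^2 * (m - s^2) \<le> 9 * (q + s^2) / r"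
proof -
  have r1: "r - 1 > 0" using r by simp
  have "r * (r - 1) * s^2 / (r - 1)^2 = r * s^2 / (r - 1)" using r1 by (simp add: power2_eq_square)
  moreover have "r * s^2 / (r - 1) - s^2 = s^2 / (r - 1)" using r1 by (simp add: field_simps)
  ultimately have "(r * q + r * (r - 1) * s^2) / (r - 1)^2 - s^2 = r * q / (r - 1)^2 + s^2 / (r - 1)"
    by (simp add: add_divide_distrib)
  moreover have "r * q / (r - 1)^2 \<le> 4 * q / r"
  proof -
    have "(3 * r - 2) * (r - 2) \<ge> 0" using r by (intro mult_nonneg_nonneg) auto
    then have "r * r \<le> 4 * (r - 1)^2" by (simp add: power2_eq_square algebra_simps)
    then have "r * q * r \<le> 4 * q * (r - 1)^2" using q
      by (metis mult.assoc mult.commute mult_left_mono)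
    then show ?thesis using r1 r by (simp add: divide_simps)
  qed
  moreover have "s^2 / (r - 1) \<le> 2 * s^2 / r"
    using r r1 mult_right_mono[OF r zero_le_power2[of s]] by (simp add: divide_simps) (simp add: algebra_simps)
  ultimately have excess: "m - s^2 \<le> (4 * q + 2 * s^2) / r" using m by (simp add: add_divide_distrib)
  have "(1 + 1 / r)^2 \<le> (3 / 2)^2" using r by (intro power_mono) (auto simp: divide_simps)
  have "(1 + 1 / r)^2 * (m - s^2) \<le> (1 + 1 / r)^2 * ((4 * q + 2 * s^2) / r)"
    using excess by (intro mult_left_mono) auto
  also have "\<dots> \<le> (3 / 2)^2 * ((4 * q + 2 * s^2) / r)"
    using \<open>(1 + 1 / r)^2 \<le> (3 / 2)^2\<close> q r by (intro mult_right_mono) auto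
  also have "\<dots> \<le> 9 * (q + s^2) / r" using q r by (simp add: divide_simps)
  finally show ?thesis .
qed

context prob_space
begin

lemma L2_sample_var:
  assumes "R > 0" "\<And>k. k < R \<Longrightarrow> L4 (Y k)"
  shows "L2 (sample_var R Y)"
proof -
  have "L2 (\<lambda>\<omega>. (1 / (real R - 1)) * ((\<Sum>k<R. (Y k \<omega>)^2) - (1 / real R) * (\<Sum>k<R. Y k \<omega>)^2))"
    using assms(2) by (intro L2_cmult L2_diff L2_sum L2_square L4_sum) auto
  moreover have "sample_var R Y
      = (\<lambda>\<omega>. (1 / (real R - 1)) * ((\<Sum>k<R. (Y k \<omega>)^2) - (1 / real R) * (\<Sum>k<R. Y k \<omega>)^2))"
    using sample_var_shift[OF assms(1), of Y _ 0] by (auto simp: fun_eq_iff)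
  ultimately show ?thesis by simp
qed

lemma expectation_sample_var:
  assumes R: "R \<ge> 2" and L: "\<And>k. k < R \<Longrightarrow> L2 (Y k)"
    and var: "\<And>k. k < R \<Longrightarrow> expectation (\<lambda>\<omega>. (Y k \<omega> - \<mu>)^2) = s"
    and uncorr: "\<And>k l. k < R \<Longrightarrow> l < R \<Longrightarrow> k \<noteq> l \<Longrightarrow>
          expectation (\<lambda>\<omega>. (Y k \<omega> - \<mu>) * (Y l \<omega> - \<mu>)) = 0"
  shows "expectation (sample_var R Y) = s"
proof -
  define Z where "Z k \<omega> = Y k \<omega> - \<mu>" for k \<omega>
  have LZ: "L2 (Z k)" if "k < R" for k unfolding Z_def using L[OF that] by (intro L2_diff L2_const)
  have int_sum_sq: "integrable M (\<lambda>\<omega>. \<Sum>k<R. (Z k \<omega>)^2)"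
    using LZ by (auto simp: L2_def)
  have int_sq_sum: "integrable M (\<lambda>\<omega>. (\<Sum>k<R. Z k \<omega>)^2)"
    using L2_sum[of "{..<R}" Z] LZ by (auto simp: L2_def)
  have "expectation (\<lambda>\<omega>. \<Sum>k<R. (Z k \<omega>)^2) = real R * s"
    using LZ var by (simp add: Bochner_Integration.integral_sum L2_def Z_def)
  moreover have "expectation (\<lambda>\<omega>. (\<Sum>k<R. Z k \<omega>)^2) = real R * s"
    using LZ uncorr var by (subst expectation_square_sum_orthogonal) (auto simp: Z_def)
  moreover have sv: "sample_var R Y \<omega> = ((\<Sum>k<R. (Z k \<omega>)^2) - (\<Sum>k<R. Z k \<omega>)^2 / real R) / (real R - 1)" for \<omega>
    unfolding Z_def using R by (intro sample_var_shift) auto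
  ultimately show ?thesis
    unfolding sv using int_sum_sq int_sq_sum R by (simp add: Bochner_Integration.integral_diff field_simps)
qed

lemma expectation_sample_var_square_le:
  assumes R: "R \<ge> 2" and L: "\<And>k. k < R \<Longrightarrow> L4 (Y k)"
    and m4: "\<And>k. k < R \<Longrightarrow> expectation (\<lambda>\<omega>. (Y k \<omega> - \<mu>)^4) = q"
    and pair: "\<And>k l. k < R \<Longrightarrow> l < R \<Longrightarrow> k \<noteq> l \<Longrightarrow>
          expectation (\<lambda>\<omega>. (Y k \<omega> - \<mu>)^2 * (Y l \<omega> - \<mu>)^2) = s * s"
  shows "expectation (\<lambda>\<omega>. (sample_var R Y \<omega>)^2)
           \<le> (real R * q + real R * (real R - 1) * s^2) / (real R - 1)^2"
proof -
  define Z where "Z k \<omega> = Y k \<omega> - \<mu>" for k \<omega>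
  have LZsq: "L2 (\<lambda>\<omega>. (Z k \<omega>)^2)" if "k < R" for k
    unfolding Z_def using L[OF that] by (intro L2_square L4_diff L4_const)
  have LSZsq: "L2 (\<lambda>\<omega>. \<Sum>k<R. (Z k \<omega>)^2)" using LZsq by (intro L2_sum) auto
  have "expectation (\<lambda>\<omega>. (sample_var R Y \<omega>)^2)
      \<le> expectation (\<lambda>\<omega>. ((\<Sum>k<R. (Z k \<omega>)^2) / (real R - 1))^2)"
  proof (rule integral_mono)
    show "integrable M (\<lambda>\<omega>. (sample_var R Y \<omega>)^2)"
      using L2_sample_var[of R Y] R L by (simp add: L2_def)
    show "integrable M (\<lambda>\<omega>. ((\<Sum>k<R. (Z k \<omega>)^2) / (real R - 1))^2)"
      using L2_cmult[OF LSZsq, of "1 / (real R - 1)"] by (simp add: L2_def)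
    show "(sample_var R Y \<omega>)^2 \<le> ((\<Sum>k<R. (Z k \<omega>)^2) / (real R - 1))^2" for \<omega>
      using sample_var_nonneg[OF R] sample_var_le_shift[OF R, of Y \<omega> \<mu>]
      by (intro power_mono) (auto simp: Z_def)
  qed
  also have "\<dots> = expectation (\<lambda>\<omega>. \<Sum>k<R. \<Sum>l<R. (Z k \<omega>)^2 * (Z l \<omega>)^2) / (real R - 1)^2"
    by (simp add: power_divide power2_eq_square[of "sum _ _"] sum_product)
  also have "expectation (\<lambda>\<omega>. \<Sum>k<R. \<Sum>l<R. (Z k \<omega>)^2 * (Z l \<omega>)^2)
      = (\<Sum>k<R. \<Sum>l<R. expectation (\<lambda>\<omega>. (Z k \<omega>)^2 * (Z l \<omega>)^2))"
  proof -
    have int: "integrable M (\<lambda>\<omega>. (Z k \<omega>)^2 * (Z l \<omega>)^2)" if "k < R" "l < R" for k l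
      using LZsq that by (intro integrable_mult_L2)
    then have "integrable M (\<lambda>\<omega>. \<Sum>l<R. (Z k \<omega>)^2 * (Z l \<omega>)^2)" if "k < R" for k
      using that by (intro Bochner_Integration.integrable_sum) auto
    with int show ?thesis by (simp add: Bochner_Integration.integral_sum)
  qed
  also have "\<dots> = (\<Sum>k<R. \<Sum>l<R. s * s + (if l = k then q - s * s else 0))"
    using m4 pair by (intro sum.cong refl) (auto simp: Z_def power4_eq_xxxx power2_eq_square mult.assoc)
  also have "\<dots> = real R * q + real R * (real R - 1) * s^2"
    by (simp add: sum.distrib power2_eq_square algebra_simps)
  finally show ?thesis .
qed

lemma expectation_inflated_sample_var_dev_le:
  assumes R: "R \<ge> 2" and L: "\<And>k. k < R \<Longrightarrow> L4 (Y k)"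
    and var: "\<And>k. k < R \<Longrightarrow> expectation (\<lambda>\<omega>. (Y k \<omega> - \<mu>)^2) = s"
    and m4: "\<And>k. k < R \<Longrightarrow> expectation (\<lambda>\<omega>. (Y k \<omega> - \<mu>)^4) = q"
    and uncorr: "\<And>k l. k < R \<Longrightarrow> l < R \<Longrightarrow> k \<noteq> l \<Longrightarrow>
          expectation (\<lambda>\<omega>. (Y k \<omega> - \<mu>) * (Y l \<omega> - \<mu>)) = 0"
    and pair: "\<And>k l. k < R \<Longrightarrow> l < R \<Longrightarrow> k \<noteq> l \<Longrightarrow>
          expectation (\<lambda>\<omega>. (Y k \<omega> - \<mu>)^2 * (Y l \<omega> - \<mu>)^2) = s * s"
  shows "expectation (\<lambda>\<omega>. (sample_var R Y \<omega> * (1 + 1 / real R) - s * (1 + 1 / real R))^2)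
           \<le> 9 * (q + s^2) / real R"
proof -
  define c where "c = 1 + 1 / real R"
  have LY: "L2 (sample_var R Y)" using R L by (intro L2_sample_var) auto
  have E: "expectation (sample_var R Y) = s"
    using R L var uncorr by (intro expectation_sample_var L4_imp_L2) auto
  have "q \<ge> 0" using m4[of 0] R by (auto intro: Bochner_Integration.integral_nonneg simp: zero_le_even_power)
  have "(sample_var R Y \<omega> * c - s * c)^2
      = c^2 * ((sample_var R Y \<omega>)^2 + (-2 * s) * sample_var R Y \<omega> + s^2)" for \<omega>
    by (simp add: power2_eq_square algebra_simps)
  then have "expectation (\<lambda>\<omega>. (sample_var R Y \<omega> * c - s * c)^2)
      = c^2 * (expectation (\<lambda>\<omega>. (sample_var R Y \<omega>)^2) - s^2)"
    using LY E integrable_L2[OF LY] by (simp add: L2_def prob_space power2_eq_square)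
  also have "\<dots> \<le> 9 * (q + s^2) / real R"
    unfolding c_def using R \<open>q \<ge> 0\<close> expectation_sample_var_square_le[OF R L m4 pair]
    by (intro inflated_sample_var_excess_le) auto
  finally show ?thesis by (simp add: c_def)
qed

end

section \<open>Independent groups of resampled variables\<close>

(* Groups are indexed by nat option: None is the dependent block and Some i is account i.
   Each group g has one original component and Rg g simulated ones. *)
fun orig_comp :: "nat option \<Rightarrow> comp" where
  "orig_comp None = OrigBlock"
| "orig_comp (Some i) = OrigInd i"

fun sim_comp :: "nat option \<Rightarrow> nat \<Rightarrow> comp" where
  "sim_comp None k = SimBlock k"
| "sim_comp (Some i) k = SimInd i k"

definition group_comps :: "(nat option \<Rightarrow> nat) \<Rightarrow> nat option \<Rightarrow> comp set" where
  "group_comps Rg g = insert (orig_comp g) (sim_comp g ` {..<Rg g})"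

definition all_comps :: "nat option set \<Rightarrow> (nat option \<Rightarrow> nat) \<Rightarrow> comp set" where
  "all_comps G Rg = (\<Union>g\<in>G. group_comps Rg g)"

lemma orig_comp_eq_iff [simp]: "orig_comp g = orig_comp h \<longleftrightarrow> g = h"
  by (cases g; cases h) auto

lemma sim_comp_eq_iff [simp]: "sim_comp g k = sim_comp h l \<longleftrightarrow> g = h \<and> k = l"
  by (cases g; cases h) auto

lemma orig_comp_neq_sim_comp [simp]: "orig_comp g \<noteq> sim_comp h k" "sim_comp h k \<noteq> orig_comp g"
  by (cases g; cases h; auto)+

lemma orig_comp_in_group_comps [simp]: "orig_comp g \<in> group_comps Rg g"
  by (simp add: group_comps_def)

lemma sim_comp_in_group_comps [simp]: "k < Rg g \<Longrightarrow> sim_comp g k \<in> group_comps Rg g"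
  by (simp add: group_comps_def)

lemma group_comps_disjoint: "g \<noteq> h \<Longrightarrow> group_comps Rg g \<inter> group_comps Rg h = {}"
  by (auto simp: group_comps_def)

lemma group_comps_subset_all_comps: "g \<in> G \<Longrightarrow> group_comps Rg g \<subseteq> all_comps G Rg"
  by (auto simp: all_comps_def)

lemma orig_comp_in_all_comps [simp]: "g \<in> G \<Longrightarrow> orig_comp g \<in> all_comps G Rg"
  using orig_comp_in_group_comps unfolding all_comps_def by blast

lemma sim_comp_in_all_comps [simp]: "g \<in> G \<Longrightarrow> k < Rg g \<Longrightarrow> sim_comp g k \<in> all_comps G Rg"
  using sim_comp_in_group_comps unfolding all_comps_def by blast

lemma measurable_orig_comp [measurable]:
  "(\<lambda>x. x (orig_comp g)) \<in> borel_measurable (PiM (group_comps Rg g) (\<lambda>_. borel))"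
  by (rule measurable_component_singleton) simp

lemma measurable_sim_comp [measurable]:
  "k < Rg g \<Longrightarrow> (\<lambda>x. x (sim_comp g k)) \<in> borel_measurable (PiM (group_comps Rg g) (\<lambda>_. borel))"
  by (rule measurable_component_singleton) simp

definition grp_err_vec :: "(nat option \<Rightarrow> nat) \<Rightarrow> nat option \<Rightarrow> (comp \<Rightarrow> real) \<Rightarrow> real" where
  "grp_err_vec Rg g x = x (orig_comp g) - (\<Sum>k<Rg g. x (sim_comp g k)) / real (Rg g)"

(* The variance estimator of group g as a function of the values x of its components, which
   enter sample_var as realisations on the one-point space. *)
definition grp_var_est_vec :: "(nat option \<Rightarrow> nat) \<Rightarrow> nat option \<Rightarrow> (comp \<Rightarrow> real) \<Rightarrow> real" where
  "grp_var_est_vec Rg g x = sample_var (Rg g) (\<lambda>k (_::unit). x (sim_comp g k)) () * (1 + 1 / real (Rg g))"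

lemma measurable_grp_err_vec [measurable]:
  "grp_err_vec Rg g \<in> borel_measurable (PiM (group_comps Rg g) (\<lambda>_. borel))"
  unfolding grp_err_vec_def[abs_def] by measurable

lemma measurable_grp_var_est_vec [measurable]:
  "grp_var_est_vec Rg g \<in> borel_measurable (PiM (group_comps Rg g) (\<lambda>_. borel))"
  unfolding grp_var_est_vec_def[abs_def] sample_var_def sample_mean_def by measurable

locale resampled_groups = prob_space M for M :: "'a measure" +
  fixes G :: "nat option set" and Rg :: "nat option \<Rightarrow> nat" and S :: "comp \<Rightarrow> 'a \<Rightarrow> real"
  assumes finite_groups: "finite G"
    and indep_comps: "indep_vars (\<lambda>_. borel) S (all_comps G Rg)"
    and L4_orig: "\<And>g. g \<in> G \<Longrightarrow> L4 (S (orig_comp g))"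
    and group_size_ge_2: "\<And>g. g \<in> G \<Longrightarrow> 2 \<le> Rg g"
    and distr_sim: "\<And>g k. g \<in> G \<Longrightarrow> k < Rg g \<Longrightarrow>
          distr M borel (S (sim_comp g k)) = distr M borel (S (orig_comp g))"
begin

definition grp_mean :: "nat option \<Rightarrow> real" where
  "grp_mean g = expectation (S (orig_comp g))"

definition grp_var :: "nat option \<Rightarrow> real" where
  "grp_var g = expectation (\<lambda>\<omega>. (S (orig_comp g) \<omega> - grp_mean g)^2)"

definition grp_m4 :: "nat option \<Rightarrow> real" where
  "grp_m4 g = expectation (\<lambda>\<omega>. (S (orig_comp g) \<omega> - grp_mean g)^4)"

definition grp_err_var :: "nat option \<Rightarrow> real" where
  "grp_err_var g = grp_var g * (1 + 1 / real (Rg g))"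

definition grp_err :: "nat option \<Rightarrow> 'a \<Rightarrow> real" where
  "grp_err g \<omega> = S (orig_comp g) \<omega> - (\<Sum>k<Rg g. S (sim_comp g k) \<omega>) / real (Rg g)"

definition grp_var_est :: "nat option \<Rightarrow> 'a \<Rightarrow> real" where
  "grp_var_est g \<omega> = sample_var (Rg g) (\<lambda>k. S (sim_comp g k)) \<omega> * (1 + 1 / real (Rg g))"

lemma grp_err_eq_vec: "grp_err g \<omega> = grp_err_vec Rg g (restrict (\<lambda>c. S c \<omega>) (group_comps Rg g))"
  by (simp add: grp_err_def grp_err_vec_def)

lemma grp_var_est_eq_vec: "grp_var_est g \<omega> = grp_var_est_vec Rg g (restrict (\<lambda>c. S c \<omega>) (group_comps Rg g))"
  unfolding grp_var_est_def grp_var_est_vec_def by (auto intro: sample_var_cong)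

lemma measurable_comp: "c \<in> all_comps G Rg \<Longrightarrow> S c \<in> borel_measurable M"
  using indep_comps unfolding indep_vars_def by auto

lemma expectation_sim_comp:
  fixes h :: "real \<Rightarrow> real"
  assumes "g \<in> G" "k < Rg g" "h \<in> borel_measurable borel"
  shows "expectation (\<lambda>\<omega>. h (S (sim_comp g k) \<omega>)) = expectation (\<lambda>\<omega>. h (S (orig_comp g) \<omega>))"
  using assms integral_distr[of "S (sim_comp g k)" M borel h] integral_distr[of "S (orig_comp g)" M borel h]
  by (simp add: distr_sim measurable_comp)

lemma integrable_sim_comp_iff:
  fixes h :: "real \<Rightarrow> real"
  assumes "g \<in> G" "k < Rg g" "h \<in> borel_measurable borel"
  shows "integrable M (\<lambda>\<omega>. h (S (sim_comp g k) \<omega>)) \<longleftrightarrow> integrable M (\<lambda>\<omega>. h (S (orig_comp g) \<omega>))"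
  using assms integrable_distr_eq[of "S (sim_comp g k)" M borel h]
    integrable_distr_eq[of "S (orig_comp g)" M borel h]
  by (simp add: distr_sim measurable_comp)

lemma L4_comp:
  assumes "g \<in> G" "c \<in> group_comps Rg g"
  shows "L4 (S c)"
proof -
  have "L4 (S (sim_comp g k))" if "k < Rg g" for k
    using assms L4_orig[of g] integrable_sim_comp_iff[of g k "\<lambda>x. x^4"] measurable_comp[of "sim_comp g k"] that
    by (auto simp: L4_def)
  then show ?thesis using assms L4_orig by (auto simp: group_comps_def)
qed

lemma expectation_comp:
  assumes "g \<in> G" "c \<in> group_comps Rg g"
  shows "expectation (S c) = grp_mean g"
  using assms expectation_sim_comp[of g _ "\<lambda>x. x"] by (auto simp: group_comps_def grp_mean_def)

lemma
  assumes "g \<in> G" "k < Rg g"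
  shows expectation_sim_comp_square: "expectation (\<lambda>\<omega>. (S (sim_comp g k) \<omega> - grp_mean g)^2) = grp_var g"
    and expectation_sim_comp_power4: "expectation (\<lambda>\<omega>. (S (sim_comp g k) \<omega> - grp_mean g)^4) = grp_m4 g"
  using expectation_sim_comp[OF assms, of "\<lambda>x. (x - grp_mean g)^2"]
    expectation_sim_comp[OF assms, of "\<lambda>x. (x - grp_mean g)^4"]
  by (auto simp: grp_var_def grp_m4_def)

lemma expectation_mult_indep_restrict:
  fixes P Q :: "'a \<Rightarrow> real"
  assumes A: "A \<subseteq> all_comps G Rg" and B: "B \<subseteq> all_comps G Rg" and AB: "A \<inter> B = {}"
    and [measurable]: "F \<in> borel_measurable (PiM A (\<lambda>_. borel))" "H \<in> borel_measurable (PiM B (\<lambda>_. borel))"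
    and P: "\<And>\<omega>. P \<omega> = F (restrict (\<lambda>c. S c \<omega>) A)"
    and Q: "\<And>\<omega>. Q \<omega> = H (restrict (\<lambda>c. S c \<omega>) B)"
    and "integrable M P" "integrable M Q"
  shows "expectation (\<lambda>\<omega>. P \<omega> * Q \<omega>) = expectation P * expectation Q"
proof -
  have "indep_var (PiM A (\<lambda>_. borel)) (\<lambda>\<omega>. restrict (\<lambda>c. S c \<omega>) A)
                  (PiM B (\<lambda>_. borel)) (\<lambda>\<omega>. restrict (\<lambda>c. S c \<omega>) B)"
    by (rule indep_var_restrict[OF indep_comps AB A B])
  then have "indep_var borel (F \<circ> (\<lambda>\<omega>. restrict (\<lambda>c. S c \<omega>) A)) borel (H \<circ> (\<lambda>\<omega>. restrict (\<lambda>c. S c \<omega>) B))"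
    by (rule indep_var_compose) auto
  moreover have "F \<circ> (\<lambda>\<omega>. restrict (\<lambda>c. S c \<omega>) A) = P" "H \<circ> (\<lambda>\<omega>. restrict (\<lambda>c. S c \<omega>) B) = Q"
    using P Q by auto
  ultimately have "indep_var borel P borel Q" by simp
  then show ?thesis using assms by (intro indep_var_lebesgue_integral)
qed

lemma expectation_mult_indep_comps:
  fixes f h :: "real \<Rightarrow> real"
  assumes "c \<in> all_comps G Rg" "d \<in> all_comps G Rg" "c \<noteq> d"
    and [measurable]: "f \<in> borel_measurable borel" "h \<in> borel_measurable borel"
    and "integrable M (\<lambda>\<omega>. f (S c \<omega>))" "integrable M (\<lambda>\<omega>. h (S d \<omega>))"
  shows "expectation (\<lambda>\<omega>. f (S c \<omega>) * h (S d \<omega>))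
       = expectation (\<lambda>\<omega>. f (S c \<omega>)) * expectation (\<lambda>\<omega>. h (S d \<omega>))"
proof (rule expectation_mult_indep_restrict[where A="{c}" and B="{d}" and F="\<lambda>x. f (x c)" and H="\<lambda>x. h (x d)"])
  show "(\<lambda>x. f (x c)) \<in> borel_measurable (PiM {c} (\<lambda>_. borel))"
    using measurable_component_singleton[of c "{c}" "\<lambda>_. borel"] by measurable
  show "(\<lambda>x. h (x d)) \<in> borel_measurable (PiM {d} (\<lambda>_. borel))"
    using measurable_component_singleton[of d "{d}" "\<lambda>_. borel"] by measurable
qed (use assms in auto)

lemma expectation_mult_centred_comps:
  assumes "g \<in> G" "c \<in> group_comps Rg g" "d \<in> group_comps Rg g" "c \<noteq> d"
  shows "expectation (\<lambda>\<omega>. (S c \<omega> - grp_mean g) * (S d \<omega> - grp_mean g)) = 0"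
proof -
  have int: "integrable M (\<lambda>\<omega>. S e \<omega> - grp_mean g)" if "e \<in> group_comps Rg g" for e
    using L4_comp[OF assms(1) that] by (intro integrable_L2 L4_imp_L2 L4_diff L4_const)
  have "expectation (\<lambda>\<omega>. (S c \<omega> - grp_mean g) * (S d \<omega> - grp_mean g))
      = expectation (\<lambda>\<omega>. S c \<omega> - grp_mean g) * expectation (\<lambda>\<omega>. S d \<omega> - grp_mean g)"
    using assms group_comps_subset_all_comps int
    by (intro expectation_mult_indep_comps[where f="\<lambda>x. x - grp_mean g" and h="\<lambda>x. x - grp_mean g"]) auto
  also have "expectation (\<lambda>\<omega>. S d \<omega> - grp_mean g) = 0"
    using assms int[of d] integrable_L2[OF L4_imp_L2[OF L4_comp[of g d]]]
    by (simp add: expectation_comp prob_space)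
  finally show ?thesis by simp
qed

lemma expectation_mult_centred_sim_comps_square:
  assumes "g \<in> G" "k < Rg g" "l < Rg g" "k \<noteq> l"
  shows "expectation (\<lambda>\<omega>. (S (sim_comp g k) \<omega> - grp_mean g)^2 * (S (sim_comp g l) \<omega> - grp_mean g)^2)
       = grp_var g * grp_var g"
proof -
  have int: "integrable M (\<lambda>\<omega>. (S (sim_comp g j) \<omega> - grp_mean g)^2)" if "j < Rg g" for j
    using L4_imp_L2[OF L4_diff[OF L4_comp[of g "sim_comp g j"] L4_const]] assms that by (simp add: L2_def)
  show ?thesis
    using assms int group_comps_subset_all_comps[of g G Rg]
    by (subst expectation_mult_indep_comps[where f="\<lambda>x. (x - grp_mean g)^2" and h="\<lambda>x. (x - grp_mean g)^2"])
      (auto simp: expectation_sim_comp_square)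
qed

lemma grp_err_centred:
  assumes "g \<in> G"
  shows "grp_err g \<omega> = (S (orig_comp g) \<omega> - grp_mean g)
                         - (\<Sum>k<Rg g. S (sim_comp g k) \<omega> - grp_mean g) / real (Rg g)"
proof -
  have "real (Rg g) > 0" using group_size_ge_2[OF assms] by simp
  then show ?thesis by (simp add: grp_err_def sum_subtractf field_simps)
qed

lemma L4_grp_err: "g \<in> G \<Longrightarrow> L4 (grp_err g)"
  unfolding grp_err_def[abs_def]
  by (intro L4_diff L4_cmult[where c="1 / real (Rg g)", simplified] L4_sum L4_comp) auto

lemma expectation_grp_err:
  assumes "g \<in> G"
  shows "expectation (grp_err g) = 0"
proof -
  have int: "integrable M (S c)" if "c \<in> group_comps Rg g" for c
    using L4_comp[OF assms that] by (intro integrable_L2 L4_imp_L2)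
  have "integrable M (\<lambda>\<omega>. \<Sum>k<Rg g. S (sim_comp g k) \<omega>)"
    using int by (intro Bochner_Integration.integrable_sum) auto
  then have "expectation (grp_err g)
      = expectation (S (orig_comp g)) - (\<Sum>k<Rg g. expectation (S (sim_comp g k))) / real (Rg g)"
    unfolding grp_err_def[abs_def] using int by (simp add: Bochner_Integration.integral_sum)
  also have "\<dots> = 0"
    using assms group_size_ge_2[OF assms] by (simp add: expectation_comp)
  finally show ?thesis .
qed

lemma expectation_grp_err_square:
  assumes g: "g \<in> G"
  shows "expectation (\<lambda>\<omega>. (grp_err g \<omega>)^2) = grp_err_var g"
proof -
  define A where "A \<omega> = S (orig_comp g) \<omega> - grp_mean g" for \<omega>
  define B where "B \<omega> = (\<Sum>k<Rg g. S (sim_comp g k) \<omega> - grp_mean g)" for \<omega>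
  define r where "r = real (Rg g)"
  have r: "r > 0" using group_size_ge_2[OF g] by (simp add: r_def)
  have LA: "L4 A" unfolding A_def using g by (intro L4_diff L4_comp L4_const) auto
  have LB: "L4 B" unfolding B_def using g by (intro L4_sum L4_diff L4_comp L4_const) auto
  have "(grp_err g \<omega>)^2 = (A \<omega>)^2 + (-2 / r) * (A \<omega> * B \<omega>) + (1 / r^2) * (B \<omega>)^2" for \<omega>
    unfolding grp_err_centred[OF g] A_def[symmetric] B_def[symmetric] r_def[symmetric] using r
    by (simp add: power2_eq_square field_simps)
  then have "expectation (\<lambda>\<omega>. (grp_err g \<omega>)^2)
      = expectation (\<lambda>\<omega>. (A \<omega>)^2) + (-2 / r) * expectation (\<lambda>\<omega>. A \<omega> * B \<omega>)
        + (1 / r^2) * expectation (\<lambda>\<omega>. (B \<omega>)^2)"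
    using integrable_L2[OF L2_square[OF LA]] integrable_L2[OF L2_mult[OF LA LB]]
      integrable_L2[OF L2_square[OF LB]] by simp
  also have "expectation (\<lambda>\<omega>. A \<omega> * B \<omega>) = 0"
  proof -
    have "expectation (\<lambda>\<omega>. A \<omega> * B \<omega>)
        = (\<Sum>k<Rg g. expectation (\<lambda>\<omega>. (S (orig_comp g) \<omega> - grp_mean g) * (S (sim_comp g k) \<omega> - grp_mean g)))"
      unfolding A_def B_def sum_distrib_left using g
      by (intro Bochner_Integration.integral_sum integrable_mult_L2 L4_imp_L2 L4_diff L4_comp L4_const) auto
    also have "\<dots> = 0" using g by (intro sum.neutral ballI expectation_mult_centred_comps) auto
    finally show ?thesis .
  qed
  also have "expectation (\<lambda>\<omega>. (B \<omega>)^2) = r * grp_var g"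
  proof -
    have "expectation (\<lambda>\<omega>. (B \<omega>)^2) = (\<Sum>k<Rg g. expectation (\<lambda>\<omega>. (S (sim_comp g k) \<omega> - grp_mean g)^2))"
      unfolding B_def using g
      by (intro expectation_square_sum_orthogonal L4_imp_L2 L4_diff L4_comp L4_const
          expectation_mult_centred_comps) auto
    also have "\<dots> = r * grp_var g" using g by (simp add: expectation_sim_comp_square r_def)
    finally show ?thesis .
  qed
  also have "expectation (\<lambda>\<omega>. (A \<omega>)^2) = grp_var g" by (simp add: A_def grp_var_def)
  finally show ?thesis using r by (simp add: grp_err_var_def r_def power2_eq_square field_simps)
qed

lemma expectation_mult_grp_err:
  assumes "g \<in> G" "h \<in> G" "g \<noteq> h"
  shows "expectation (\<lambda>\<omega>. grp_err g \<omega> * grp_err h \<omega>) = 0"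
proof -
  have "expectation (\<lambda>\<omega>. grp_err g \<omega> * grp_err h \<omega>) = expectation (grp_err g) * expectation (grp_err h)"
    using assms integrable_L2[OF L4_imp_L2[OF L4_grp_err]]
    by (intro expectation_mult_indep_restrict[where A="group_comps Rg g" and B="group_comps Rg h"
          and P="grp_err g" and Q="grp_err h" and F="grp_err_vec Rg g" and H="grp_err_vec Rg h"])
      (auto simp: group_comps_subset_all_comps group_comps_disjoint grp_err_eq_vec)
  then show ?thesis using assms by (simp add: expectation_grp_err)
qed

theorem variance_sum_grp_err:
  "expectation (\<lambda>\<omega>. ((\<Sum>g\<in>G. grp_err g \<omega>) - expectation (\<lambda>\<omega>. \<Sum>g\<in>G. grp_err g \<omega>))^2)
     = (\<Sum>g\<in>G. grp_err_var g)"
proof -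
  have "expectation (\<lambda>\<omega>. \<Sum>g\<in>G. grp_err g \<omega>) = 0"
    using finite_groups L4_grp_err
    by (simp add: Bochner_Integration.integral_sum integrable_L2 L4_imp_L2 expectation_grp_err)
  then have "expectation (\<lambda>\<omega>. ((\<Sum>g\<in>G. grp_err g \<omega>) - expectation (\<lambda>\<omega>. \<Sum>g\<in>G. grp_err g \<omega>))^2)
      = (\<Sum>g\<in>G. expectation (\<lambda>\<omega>. (grp_err g \<omega>)^2))"
    using finite_groups
    by (simp add: expectation_square_sum_orthogonal L4_imp_L2 L4_grp_err expectation_mult_grp_err)
  also have "\<dots> = (\<Sum>g\<in>G. grp_err_var g)" by (simp add: expectation_grp_err_square)
  finally show ?thesis .
qed

lemma L2_grp_var_est:
  assumes "g \<in> G"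
  shows "L2 (grp_var_est g)"
proof -
  have "L2 (sample_var (Rg g) (\<lambda>k. S (sim_comp g k)))"
    using assms group_size_ge_2[OF assms] by (intro L2_sample_var L4_comp) auto
  then show ?thesis unfolding grp_var_est_def[abs_def] by (subst mult.commute) (rule L2_cmult)
qed

lemma expectation_grp_var_est:
  assumes "g \<in> G"
  shows "expectation (grp_var_est g) = grp_err_var g"
proof -
  have "expectation (sample_var (Rg g) (\<lambda>k. S (sim_comp g k))) = grp_var g"
    using assms group_size_ge_2[OF assms]
    by (intro expectation_sample_var[where \<mu>="grp_mean g"] L4_imp_L2 L4_comp
        expectation_sim_comp_square expectation_mult_centred_comps) auto
  then show ?thesis by (simp add: grp_var_est_def[abs_def] grp_err_var_def)
qed

lemma expectation_grp_var_est_dev_square_le: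
  assumes "g \<in> G"
  shows "expectation (\<lambda>\<omega>. (grp_var_est g \<omega> - grp_err_var g)^2) \<le> 9 * (grp_m4 g + (grp_var g)^2) / real (Rg g)"
  unfolding grp_var_est_def grp_err_var_def using assms
  by (intro expectation_inflated_sample_var_dev_le[where \<mu>="grp_mean g"] group_size_ge_2 L4_comp
      expectation_sim_comp_square expectation_sim_comp_power4 expectation_mult_centred_comps
      expectation_mult_centred_sim_comps_square) auto

lemma expectation_mult_grp_var_est_dev:
  assumes "g \<in> G" "h \<in> G" "g \<noteq> h"
  shows "expectation (\<lambda>\<omega>. (grp_var_est g \<omega> - grp_err_var g) * (grp_var_est h \<omega> - grp_err_var h)) = 0"
proof -
  have "expectation (\<lambda>\<omega>. (grp_var_est g \<omega> - grp_err_var g) * (grp_var_est h \<omega> - grp_err_var h))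
      = expectation (\<lambda>\<omega>. grp_var_est g \<omega> - grp_err_var g) * expectation (\<lambda>\<omega>. grp_var_est h \<omega> - grp_err_var h)"
    using assms integrable_L2[OF L2_diff[OF L2_grp_var_est L2_const]]
    by (intro expectation_mult_indep_restrict[where A="group_comps Rg g" and B="group_comps Rg h"
          and F="\<lambda>x. grp_var_est_vec Rg g x - grp_err_var g" and H="\<lambda>x. grp_var_est_vec Rg h x - grp_err_var h"])
      (auto simp: group_comps_subset_all_comps group_comps_disjoint grp_var_est_eq_vec)
  then show ?thesis
    using assms integrable_L2[OF L2_grp_var_est] by (simp add: expectation_grp_var_est prob_space)
qed

lemma L2_sum_grp_var_est: "L2 (\<lambda>\<omega>. \<Sum>g\<in>G. grp_var_est g \<omega>)"
  using finite_groups by (intro L2_sum L2_grp_var_est) auto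

theorem expectation_sum_grp_var_est: "expectation (\<lambda>\<omega>. \<Sum>g\<in>G. grp_var_est g \<omega>) = (\<Sum>g\<in>G. grp_err_var g)"
  using finite_groups integrable_L2[OF L2_grp_var_est]
  by (simp add: Bochner_Integration.integral_sum expectation_grp_var_est)

theorem variance_sum_grp_var_est_le:
  "expectation (\<lambda>\<omega>. ((\<Sum>g\<in>G. grp_var_est g \<omega>) - expectation (\<lambda>\<omega>. \<Sum>g\<in>G. grp_var_est g \<omega>))^2)
     \<le> (\<Sum>g\<in>G. 9 * (grp_m4 g + (grp_var g)^2) / real (Rg g))"
proof -
  have "(\<Sum>g\<in>G. grp_var_est g \<omega>) - expectation (\<lambda>\<omega>. \<Sum>g\<in>G. grp_var_est g \<omega>)
      = (\<Sum>g\<in>G. grp_var_est g \<omega> - grp_err_var g)" for \<omega>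
    by (simp add: expectation_sum_grp_var_est sum_subtractf)
  then have "expectation (\<lambda>\<omega>. ((\<Sum>g\<in>G. grp_var_est g \<omega>) - expectation (\<lambda>\<omega>. \<Sum>g\<in>G. grp_var_est g \<omega>))^2)
      = (\<Sum>g\<in>G. expectation (\<lambda>\<omega>. (grp_var_est g \<omega> - grp_err_var g)^2))"
    using finite_groups
    by (simp add: expectation_square_sum_orthogonal L2_diff L2_grp_var_est L2_const
        expectation_mult_grp_var_est_dev)
  also have "\<dots> \<le> (\<Sum>g\<in>G. 9 * (grp_m4 g + (grp_var g)^2) / real (Rg g))"
    by (intro sum_mono expectation_grp_var_est_dev_square_le)
  finally show ?thesis .
qed

end

section \<open>A population with simulated realisations\<close>

definition group_size :: "(nat \<Rightarrow> nat) \<Rightarrow> nat \<Rightarrow> nat option \<Rightarrow> nat" where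
  "group_size R RD g = (case g of None \<Rightarrow> RD | Some i \<Rightarrow> R i)"

definition comp_total ::
  "nat set \<Rightarrow> (nat \<Rightarrow> 'a \<Rightarrow> real) \<Rightarrow> (nat \<Rightarrow> nat \<Rightarrow> 'a \<Rightarrow> real) \<Rightarrow> (nat \<Rightarrow> nat \<Rightarrow> 'a \<Rightarrow> real)
   \<Rightarrow> comp \<Rightarrow> 'a \<Rightarrow> real" where
  "comp_total D X Xs XsD c \<omega> = (case c of OrigInd i \<Rightarrow> X i \<omega> | OrigBlock \<Rightarrow> XD_tot D X \<omega>
     | SimInd i k \<Rightarrow> Xs i k \<omega> | SimBlock k \<Rightarrow> XD_tot D (XsD k) \<omega>)"

definition cmoment4 :: "'a measure \<Rightarrow> ('a \<Rightarrow> real) \<Rightarrow> real" where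
  "cmoment4 M Y = integral\<^sup>L M (\<lambda>\<omega>. (Y \<omega> - mean M Y)^4)"

lemma group_size_simps [simp]: "group_size R RD None = RD" "group_size R RD (Some i) = R i"
  by (simp_all add: group_size_def)

lemma comp_total_simps [simp]:
  "comp_total D X Xs XsD (OrigInd i) = X i" "comp_total D X Xs XsD OrigBlock = XD_tot D X"
  "comp_total D X Xs XsD (SimInd i k) = Xs i k" "comp_total D X Xs XsD (SimBlock k) = XD_tot D (XsD k)"
  by (auto simp: fun_eq_iff comp_total_def)

lemma comp_total_eq_sum_coords: "comp_total D X Xs XsD c \<omega> = (\<Sum>j\<in>coords D c. compvar D X Xs XsD c \<omega> j)"
  by (auto simp: comp_total_def coords_def compvar_def XD_tot_def split: comp.split)

lemma comps_eq_all_comps: "comps I R RD = all_comps (insert None (Some ` I)) (group_size R RD)"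
  by (auto simp: comps_def all_comps_def group_comps_def group_size_def image_iff)

lemma sum_insert_None_Some:
  "finite I \<Longrightarrow> (\<Sum>g\<in>insert None (Some ` I). f g) = f None + (\<Sum>i\<in>I. f (Some i))"
  by (simp add: sum.reindex image_iff)

lemma cmoment4_nonneg: "cmoment4 M Y \<ge> 0"
  unfolding cmoment4_def by (intro Bochner_Integration.integral_nonneg) (simp add: zero_le_even_power)

lemma cmoment4_eq_kurt: "var M Y > 0 \<Longrightarrow> cmoment4 M Y = kurt M Y * (var M Y)^2"
  unfolding kurt_def cmoment4_def by simp

lemma var_nonneg: "var M Y \<ge> 0"
  unfolding var_def by (intro Bochner_Integration.integral_nonneg) simp

locale simulated_population = prob_space M for M :: "'a measure" +
  fixes I D :: "nat set" and X :: "nat \<Rightarrow> 'a \<Rightarrow> real"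
    and Xs XsD :: "nat \<Rightarrow> nat \<Rightarrow> 'a \<Rightarrow> real" and R :: "nat \<Rightarrow> nat" and RD :: nat
  assumes finite_accounts: "finite I" and finite_block: "finite D"
    and measurable_X: "\<And>i. i \<in> I \<union> D \<Longrightarrow> X i \<in> borel_measurable M"
    and integrable_X_power4: "\<And>i. i \<in> I \<union> D \<Longrightarrow> integrable M (\<lambda>\<omega>. (X i \<omega>)^4)"
    and measurable_XsD: "\<And>k j. k < RD \<Longrightarrow> j \<in> D \<Longrightarrow> XsD k j \<in> borel_measurable M"
    and distr_Xs: "\<And>i k. i \<in> I \<Longrightarrow> k < R i \<Longrightarrow> distr M borel (Xs i k) = distr M borel (X i)"
    and distr_XsD: "\<And>k. k < RD \<Longrightarrow>
          distr M (PiM D (\<lambda>_. borel)) (\<lambda>\<omega>. restrict (\<lambda>j. XsD k j \<omega>) D)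
        = distr M (PiM D (\<lambda>_. borel)) (\<lambda>\<omega>. restrict (\<lambda>j. X j \<omega>) D)"
    and indep: "indep_vars (\<lambda>c. PiM (coords D c) (\<lambda>_. borel)) (compvar D X Xs XsD) (comps I R RD)"
    and R_ge_2: "\<And>i. i \<in> I \<Longrightarrow> R i \<ge> 2"
    and RD_ge_2: "RD \<ge> 2"
begin

abbreviation groups :: "nat option set" where
  "groups \<equiv> insert None (Some ` I)"

lemma indep_comp_total: "indep_vars (\<lambda>_. borel) (comp_total D X Xs XsD) (all_comps groups (group_size R RD))"
proof -
  have "indep_vars (\<lambda>_. borel) (\<lambda>c \<omega>. (\<lambda>x. \<Sum>j\<in>coords D c. x j) (compvar D X Xs XsD c \<omega>)) (comps I R RD)"
  proof (rule indep_vars_compose2[OF indep])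
    fix c
    have "finite (coords D c)"
      using finite_block by (auto simp: coords_def split: comp.split)
    then show "(\<lambda>x::nat \<Rightarrow> real. \<Sum>j\<in>coords D c. x j) \<in> borel_measurable (PiM (coords D c) (\<lambda>_. borel))"
      by (intro borel_measurable_sum measurable_component_singleton)
  qed
  then show ?thesis
    unfolding comps_eq_all_comps by (simp add: comp_total_eq_sum_coords[abs_def])
qed

lemma L4_XD_tot: "L4 (XD_tot D X)"
  unfolding XD_tot_def[abs_def] using finite_block measurable_X integrable_X_power4
  by (intro L4_sum) (auto simp: L4_def)

lemma distr_XD_tot_sim:
  assumes "k < RD"
  shows "distr M borel (XD_tot D (XsD k)) = distr M borel (XD_tot D X)"
proof -
  have sum: "(\<lambda>x::nat \<Rightarrow> real. \<Sum>j\<in>D. x j) \<in> borel_measurable (PiM D (\<lambda>_. borel))"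
    using finite_block by (intro borel_measurable_sum measurable_component_singleton)
  have sim: "(\<lambda>\<omega>. restrict (\<lambda>j. XsD k j \<omega>) D) \<in> measurable M (PiM D (\<lambda>_. borel))"
    using measurable_XsD[OF assms] by (intro measurable_restrict) auto
  have orig: "(\<lambda>\<omega>. restrict (\<lambda>j. X j \<omega>) D) \<in> measurable M (PiM D (\<lambda>_. borel))"
    using measurable_X by (intro measurable_restrict) auto
  have tot: "XD_tot D Y = (\<lambda>x. \<Sum>j\<in>D. x j) \<circ> (\<lambda>\<omega>. restrict (\<lambda>j. Y j \<omega>) D)" for Y
    by (auto simp: XD_tot_def fun_eq_iff)
  show ?thesis
    unfolding tot using distr_distr[OF sum sim, symmetric] distr_distr[OF sum orig, symmetric] distr_XsD[OF assms]
    by simp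
qed

sublocale grp: resampled_groups M groups "group_size R RD" "comp_total D X Xs XsD"
proof
  show "finite groups" using finite_accounts by simp
  show "indep_vars (\<lambda>_. borel) (comp_total D X Xs XsD) (all_comps groups (group_size R RD))"
    by (rule indep_comp_total)
  show "L4 (comp_total D X Xs XsD (orig_comp g))" if "g \<in> groups" for g
    using that L4_XD_tot measurable_X integrable_X_power4 by (auto simp: L4_def)
  show "2 \<le> group_size R RD g" if "g \<in> groups" for g
    using that R_ge_2 RD_ge_2 by auto
  show "distr M borel (comp_total D X Xs XsD (sim_comp g k))
      = distr M borel (comp_total D X Xs XsD (orig_comp g))"
    if "g \<in> groups" "k < group_size R RD g" for g k
    using that distr_Xs distr_XD_tot_sim by auto
qed

lemma sigma2_hat_eq: "sigma2_hat I D R RD Xs XsD = (\<lambda>\<omega>. \<Sum>g\<in>groups. grp.grp_var_est g \<omega>)"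
  by (simp only: sum_insert_None_Some[OF finite_accounts])
    (simp add: fun_eq_iff sigma2_hat_def grp.grp_var_est_def)

lemma error_eq: "(\<lambda>\<omega>. X_tot I D X \<omega> - mu_hat I D R RD Xs XsD \<omega>) = (\<lambda>\<omega>. \<Sum>g\<in>groups. grp.grp_err g \<omega>)"
  by (simp only: sum_insert_None_Some[OF finite_accounts])
    (simp add: fun_eq_iff X_tot_def mu_hat_def sample_mean_def grp.grp_err_def sum_subtractf)

lemma grp_var_eq: "grp.grp_var (Some i) = var M (X i)" "grp.grp_var None = var M (XD_tot D X)"
  by (simp_all add: grp.grp_var_def grp.grp_mean_def var_def mean_def)

lemma grp_m4_eq: "grp.grp_m4 (Some i) = cmoment4 M (X i)" "grp.grp_m4 None = cmoment4 M (XD_tot D X)"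
  by (simp_all add: grp.grp_m4_def grp.grp_mean_def cmoment4_def mean_def)

theorem mean_sigma2_hat:
  "mean M (sigma2_hat I D R RD Xs XsD) = var M (\<lambda>\<omega>. X_tot I D X \<omega> - mu_hat I D R RD Xs XsD \<omega>)"
  unfolding sigma2_hat_eq error_eq mean_def var_def
  by (simp add: grp.variance_sum_grp_err grp.expectation_sum_grp_var_est)

lemma var_error_eq:
  "var M (\<lambda>\<omega>. X_tot I D X \<omega> - mu_hat I D R RD Xs XsD \<omega>)
     = (\<Sum>i\<in>I. var M (X i) * (1 + 1 / real (R i))) + var M (XD_tot D X) * (1 + 1 / real RD)"
proof -
  have "var M (\<lambda>\<omega>. \<Sum>g\<in>groups. grp.grp_err g \<omega>) = (\<Sum>g\<in>groups. grp.grp_err_var g)"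
    unfolding var_def mean_def by (rule grp.variance_sum_grp_err)
  then show ?thesis
    unfolding error_eq sum_insert_None_Some[OF finite_accounts] by (simp add: grp.grp_err_var_def grp_var_eq)
qed

lemma card_mult_sigma_bar2_le_var_error:
  "real (card I) * sigma_bar2 M I X \<le> var M (\<lambda>\<omega>. X_tot I D X \<omega> - mu_hat I D R RD Xs XsD \<omega>)"
proof -
  have "real (card I) * sigma_bar2 M I X \<le> (\<Sum>i\<in>I. var M (X i))"
    by (simp add: sigma_bar2_def sum_nonneg var_nonneg)
  also have "\<dots> \<le> (\<Sum>i\<in>I. var M (X i) * (1 + 1 / real (R i)))"
    by (intro sum_mono) (simp add: distrib_left var_nonneg)
  also have "\<dots> \<le> var M (\<lambda>\<omega>. X_tot I D X \<omega> - mu_hat I D R RD Xs XsD \<omega>)"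
    unfolding var_error_eq by (simp add: var_nonneg)
  finally show ?thesis .
qed

lemma variance_sigma2_hat_le:
  "integral\<^sup>L M (\<lambda>\<omega>. (sigma2_hat I D R RD Xs XsD \<omega> - mean M (sigma2_hat I D R RD Xs XsD))^2)
     \<le> (\<Sum>i\<in>I. 9 * (cmoment4 M (X i) + (var M (X i))^2) / real (R i))
        + 9 * (cmoment4 M (XD_tot D X) + (var M (XD_tot D X))^2) / real RD"
  using grp.variance_sum_grp_var_est_le
  unfolding sigma2_hat_eq mean_def sum_insert_None_Some[OF finite_accounts]
  by (simp add: grp_var_eq grp_m4_eq add.commute)

end

section \<open>Relative consistency\<close>

lemma sigma_bar2_pos:
  assumes "finite I" "I \<noteq> {}" "\<And>i. i \<in> I \<Longrightarrow> var M (X i) > 0"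
  shows "sigma_bar2 M I X > 0"
  unfolding sigma_bar2_def using assms by (intro divide_pos_pos sum_pos) (auto simp: card_gt_0_iff)

lemma sum_accounts_moment_le:
  fixes M :: "'a measure" and X :: "nat \<Rightarrow> 'a \<Rightarrow> real"
  assumes I: "finite I" "I \<noteq> {}"
    and var_pos: "\<And>i. i \<in> I \<Longrightarrow> var M (X i) > 0"
    and kurt: "\<And>i. i \<in> I \<Longrightarrow> kurt M (X i) \<le> K"
    and gamma: "gamma2 M I X \<le> C"
    and R: "\<And>i. i \<in> I \<Longrightarrow> R i \<ge> 2"
  shows "(\<Sum>i\<in>I. 9 * (cmoment4 M (X i) + (var M (X i))^2) / real (R i))
       \<le> 9 / 2 * (K + 1) * (C + 1) * real (card I) * (sigma_bar2 M I X)^2"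
proof -
  have N: "real (card I) > 0" using I by (simp add: card_gt_0_iff)
  have sb: "sigma_bar2 M I X > 0" using I var_pos by (rule sigma_bar2_pos)
  obtain i where "i \<in> I" using I by blast
  then have "K \<ge> 0"
    using kurt var_pos cmoment4_nonneg[of M "X i"] cmoment4_eq_kurt[of M "X i"]
    by (smt (verit) zero_less_power zero_le_mult_iff)
  have sum_squares: "(\<Sum>i\<in>I. (var M (X i))^2) = real (card I) * (sigma_bar2 M I X)^2 * (gamma2 M I X + 1)"
    using N sb by (simp add: gamma2_def field_simps)
  have "(\<Sum>i\<in>I. 9 * (cmoment4 M (X i) + (var M (X i))^2) / real (R i))
      \<le> (\<Sum>i\<in>I. 9 / 2 * (K + 1) * (var M (X i))^2)"
  proof (rule sum_mono)
    fix i assume i: "i \<in> I"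
    have "9 * (cmoment4 M (X i) + (var M (X i))^2) / real (R i)
        \<le> 9 * (cmoment4 M (X i) + (var M (X i))^2) / 2"
      using R[OF i] cmoment4_nonneg[of M "X i"] by (intro divide_left_mono) auto
    also have "\<dots> \<le> 9 / 2 * (K + 1) * (var M (X i))^2"
      using kurt[OF i] cmoment4_eq_kurt[OF var_pos[OF i]] by (simp add: algebra_simps mult_right_mono)
    finally show "9 * (cmoment4 M (X i) + (var M (X i))^2) / real (R i)
        \<le> 9 / 2 * (K + 1) * (var M (X i))^2" .
  qed
  also have "\<dots> = 9 / 2 * (K + 1) * (real (card I) * (sigma_bar2 M I X)^2 * (gamma2 M I X + 1))"
    unfolding sum_distrib_left[symmetric] sum_squares by simp
  also have "\<dots> \<le> 9 / 2 * (K + 1) * (real (card I) * (sigma_bar2 M I X)^2 * (C + 1))"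
    using \<open>K \<ge> 0\<close> gamma N by (intro mult_left_mono) auto
  finally show ?thesis by (simp add: mult_ac)
qed

lemma variance_ratio_bound_le:
  fixes Q a b N s v e :: real
  assumes "0 \<le> Q" "Q \<le> a * N * s^2 + b" "N > 0" "s > 0" "N * s \<le> v" "e > 0"
  shows "Q / (e * v)^2 \<le> a / e^2 / N + b / e^2 / (N^2 * s^2)"
proof -
  have "v > 0" using mult_pos_pos[of N s] assms by linarith
  then have "0 < (e * (N * s))^2" "0 < (e * v)^2" using assms by simp_all
  moreover have "(e * (N * s))^2 \<le> (e * v)^2"
    using assms by (intro power_mono mult_left_mono) auto
  ultimately have "Q / (e * v)^2 \<le> Q / (e * (N * s))^2"
    using assms(1) by (intro divide_left_mono) auto
  also have "\<dots> \<le> (a * N * s^2 + b) / (e * (N * s))^2"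
    using assms(2) \<open>0 < (e * (N * s))^2\<close> by (intro divide_right_mono) auto
  also have "\<dots> = a / e^2 / N + b / e^2 / (N^2 * s^2)"
    using assms by (simp add: field_simps power2_eq_square)
  finally show ?thesis .
qed

context simulated_population
begin

lemma prob_relative_error_le:
  assumes "I \<noteq> {}" "e > 0"
    and var_pos: "\<And>i. i \<in> I \<Longrightarrow> var M (X i) > 0" and var_block_pos: "var M (XD_tot D X) > 0"
    and kurt: "\<And>i. i \<in> I \<Longrightarrow> kurt M (X i) \<le> K" and gamma: "gamma2 M I X \<le> C"
  shows "prob {\<omega> \<in> space M. \<bar>sigma2_hat I D R RD Xs XsD \<omega>
              / var M (\<lambda>\<omega>. X_tot I D X \<omega> - mu_hat I D R RD Xs XsD \<omega>) - 1\<bar> > e}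
       \<le> 9 / 2 * (K + 1) * (C + 1) / e^2 / real (card I)
         + 9 / e^2 * ((var M (XD_tot D X))^2 * (kurt M (XD_tot D X) + 1)
                      / (real RD * ((sigma_bar2 M I X)^2 * (real (card I))^2)))"
proof -
  let ?sh = "sigma2_hat I D R RD Xs XsD"
  let ?V = "var M (\<lambda>\<omega>. X_tot I D X \<omega> - mu_hat I D R RD Xs XsD \<omega>)"
  let ?B = "(var M (XD_tot D X))^2 * (kurt M (XD_tot D X) + 1)"
  let ?N = "real (card I)" and ?sb = "sigma_bar2 M I X"
  have N: "?N > 0" using assms(1) finite_accounts by (simp add: card_gt_0_iff)
  have sb: "?sb > 0" using finite_accounts assms(1) var_pos by (rule sigma_bar2_pos)
  have NV: "?N * ?sb \<le> ?V" by (rule card_mult_sigma_bar2_le_var_error)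
  have V: "?V > 0" using mult_pos_pos[OF N sb] NV by linarith
  have L2_sh: "L2 ?sh" unfolding sigma2_hat_eq by (rule grp.L2_sum_grp_var_est)
  have "prob {\<omega> \<in> space M. \<bar>?sh \<omega> / ?V - 1\<bar> > e} \<le> variance ?sh / (e * ?V)^2"
    using L2_sh V \<open>e > 0\<close> mean_sigma2_hat by (intro prob_relative_deviation_le) (auto simp: L2_def mean_def)
  also have "\<dots> \<le> 9 / 2 * (K + 1) * (C + 1) / e^2 / ?N + 9 * ?B / real RD / e^2 / (?N^2 * ?sb^2)"
  proof (rule variance_ratio_bound_le[OF _ _ N sb NV \<open>e > 0\<close>])
    show "0 \<le> variance ?sh" by simp
    have "?B = cmoment4 M (XD_tot D X) + (var M (XD_tot D X))^2"
      using cmoment4_eq_kurt[OF var_block_pos] by (simp add: algebra_simps)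
    then show "variance ?sh \<le> 9 / 2 * (K + 1) * (C + 1) * ?N * ?sb^2 + 9 * ?B / real RD"
      using variance_sigma2_hat_le
        sum_accounts_moment_le[of I M X K C R, OF finite_accounts assms(1) var_pos kurt gamma R_ge_2]
      by (simp add: mean_def)
  qed
  finally show ?thesis by (simp add: mult_ac)
qed

end

lemma block_ratio_tendsto_0:
  fixes B g :: "nat \<Rightarrow> real" and RD :: "nat \<Rightarrow> nat"
  assumes RD: "\<And>n. RD n > 0"
    and block: "B \<in> o(g) \<or> (B \<in> O(g) \<and> filterlim RD at_top sequentially)"
  shows "(\<lambda>n. B n / (real (RD n) * g n)) \<longlonglongrightarrow> 0"
proof -
  have "1 / real (RD n) \<le> 1" for n using RD[of n] by (simp add: divide_le_eq)
  then have "(\<lambda>n. 1 / real (RD n)) \<in> O(\<lambda>_. 1)"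
    by (intro bigoI[of _ 1] always_eventually) auto
  have "(\<lambda>n. B n * (1 / real (RD n))) \<in> o(\<lambda>n. g n * 1)"
    using block
  proof
    assume "B \<in> o(g)"
    then show ?thesis using \<open>(\<lambda>n. 1 / real (RD n)) \<in> O(\<lambda>_. 1)\<close> by (rule landau_o.small_big_mult)
  next
    assume *: "B \<in> O(g) \<and> filterlim RD at_top sequentially"
    then have "filterlim (\<lambda>n. real (RD n)) at_top sequentially"
      using filterlim_real_sequentially by (auto intro: filterlim_compose)
    then have "(\<lambda>n. 1 / real (RD n)) \<longlonglongrightarrow> 0"
      by (intro tendsto_divide_0[OF tendsto_const] filterlim_at_top_imp_at_infinity)
    then have "(\<lambda>n. 1 / real (RD n)) \<in> o(\<lambda>_. 1)"
      by (intro smalloI_tendsto) auto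
    with * show ?thesis by (intro landau_o.big_small_mult) auto
  qed
  then show ?thesis by (auto dest: smalloD_tendsto simp: mult.commute)
qed

theorem lemma3:
  fixes M :: "nat \<Rightarrow> 'a measure"
    and I D :: "nat \<Rightarrow> nat set"
    and X :: "nat \<Rightarrow> nat \<Rightarrow> 'a \<Rightarrow> real"
    and Xs :: "nat \<Rightarrow> nat \<Rightarrow> nat \<Rightarrow> 'a \<Rightarrow> real"
    and XsD :: "nat \<Rightarrow> nat \<Rightarrow> nat \<Rightarrow> 'a \<Rightarrow> real"
    and R :: "nat \<Rightarrow> nat \<Rightarrow> nat"
    and RD :: "nat \<Rightarrow> nat"
  assumes prob: "\<And>n. prob_space (M n)"
    and fin: "\<And>n. finite (I n)" "\<And>n. finite (D n)" "\<And>n. I n \<inter> D n = {}"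
    and card_inf: "filterlim (\<lambda>n. card (I n)) at_top sequentially"
    and meas: "\<And>n i. i \<in> I n \<union> D n \<Longrightarrow> X n i \<in> borel_measurable (M n)"
    and fourth: "\<And>n i. i \<in> I n \<union> D n \<Longrightarrow> integrable (M n) (\<lambda>\<omega>. (X n i \<omega>)^4)"
    and var_pos: "\<And>n i. i \<in> I n \<union> D n \<Longrightarrow> var (M n) (X n i) > 0"
    and varD_pos: "\<And>n. var (M n) (XD_tot (D n) (X n)) > 0"
    and sim_meas: "\<And>n i k. i \<in> I n \<Longrightarrow> k < R n i \<Longrightarrow> Xs n i k \<in> borel_measurable (M n)"
    and simD_meas: "\<And>n k j. k < RD n \<Longrightarrow> j \<in> D n \<Longrightarrow> XsD n k j \<in> borel_measurable (M n)"
    and sim_distr: "\<And>n i k. i \<in> I n \<Longrightarrow> k < R n i \<Longrightarrow>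
          distr (M n) borel (Xs n i k) = distr (M n) borel (X n i)"
    and simD_distr: "\<And>n k. k < RD n \<Longrightarrow>
          distr (M n) (PiM (D n) (\<lambda>_. borel)) (\<lambda>\<omega>. restrict (\<lambda>j. XsD n k j \<omega>) (D n))
        = distr (M n) (PiM (D n) (\<lambda>_. borel)) (\<lambda>\<omega>. restrict (\<lambda>j. X n j \<omega>) (D n))"
    and indep: "\<And>n. prob_space.indep_vars (M n)
          (\<lambda>c. PiM (coords (D n) c) (\<lambda>_. borel)) (compvar (D n) (X n) (Xs n) (XsD n))
          (comps (I n) (R n) (RD n))"
    and R1: "\<And>n i. i \<in> I n \<Longrightarrow> R n i \<ge> 2"
    and RD2: "\<And>n. RD n \<ge> 2"
    and R2: "\<exists>\<kappa>max. \<forall>n. \<forall>i\<in>I n. kurt (M n) (X n i) \<le> \<kappa>max"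
    and R3: "\<exists>C. eventually (\<lambda>n. \<bar>gamma2 (M n) (I n) (X n)\<bar> \<le> C) sequentially"
    and block: "(\<lambda>n. (var (M n) (XD_tot (D n) (X n)))^2 * (kurt (M n) (XD_tot (D n) (X n)) + 1))
                  \<in> o(\<lambda>n. (sigma_bar2 (M n) (I n) (X n))^2 * (real (card (I n)))^2)
             \<or> ((\<lambda>n. (var (M n) (XD_tot (D n) (X n)))^2 * (kurt (M n) (XD_tot (D n) (X n)) + 1))
                  \<in> O(\<lambda>n. (sigma_bar2 (M n) (I n) (X n))^2 * (real (card (I n)))^2)
                \<and> filterlim RD at_top sequentially)"
  shows "(\<forall>n. mean (M n) (sigma2_hat (I n) (D n) (R n) (RD n) (Xs n) (XsD n))
              = var (M n) (\<lambda>\<omega>. X_tot (I n) (D n) (X n) \<omega>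
                                 - mu_hat (I n) (D n) (R n) (RD n) (Xs n) (XsD n) \<omega>))
       \<and> (\<forall>\<epsilon>>0. (\<lambda>n. measure (M n) {\<omega> \<in> space (M n).
              \<bar>sigma2_hat (I n) (D n) (R n) (RD n) (Xs n) (XsD n) \<omega>
               / var (M n) (\<lambda>\<omega>. X_tot (I n) (D n) (X n) \<omega>
                                 - mu_hat (I n) (D n) (R n) (RD n) (Xs n) (XsD n) \<omega>) - 1\<bar> > \<epsilon>})
            \<longlonglongrightarrow> 0)"
proof (intro conjI allI impI)
  have pop: "simulated_population (M n) (I n) (D n) (X n) (Xs n) (XsD n) (R n) (RD n)" for n
    using prob fin meas fourth simD_meas sim_distr simD_distr indep R1 RD2
    by (simp add: simulated_population_def simulated_population_axioms_def)
  then show "mean (M n) (sigma2_hat (I n) (D n) (R n) (RD n) (Xs n) (XsD n))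
      = var (M n) (\<lambda>\<omega>. X_tot (I n) (D n) (X n) \<omega> - mu_hat (I n) (D n) (R n) (RD n) (Xs n) (XsD n) \<omega>)" for n
    by (rule simulated_population.mean_sigma2_hat)
  fix \<epsilon> :: real assume "\<epsilon> > 0"
  obtain K where K: "\<forall>n. \<forall>i\<in>I n. kurt (M n) (X n i) \<le> K" using R2 by blast
  obtain C where C: "eventually (\<lambda>n. \<bar>gamma2 (M n) (I n) (X n)\<bar> \<le> C) sequentially" using R3 by blast
  let ?accounts = "\<lambda>n. 9 / 2 * (K + 1) * (C + 1) / \<epsilon>^2 / real (card (I n))"
  let ?block = "\<lambda>n. 9 / \<epsilon>^2 * ((var (M n) (XD_tot (D n) (X n)))^2 * (kurt (M n) (XD_tot (D n) (X n)) + 1)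
      / (real (RD n) * ((sigma_bar2 (M n) (I n) (X n))^2 * (real (card (I n)))^2)))"
  have "eventually (\<lambda>n. card (I n) \<ge> 1) sequentially"
    using card_inf by (simp add: filterlim_at_top)
  with C have bound: "eventually (\<lambda>n. measure (M n) {\<omega> \<in> space (M n).
      \<bar>sigma2_hat (I n) (D n) (R n) (RD n) (Xs n) (XsD n) \<omega>
       / var (M n) (\<lambda>\<omega>. X_tot (I n) (D n) (X n) \<omega> - mu_hat (I n) (D n) (R n) (RD n) (Xs n) (XsD n) \<omega>) - 1\<bar> > \<epsilon>}
      \<le> ?accounts n + ?block n) sequentially"
  proof eventually_elim
    case (elim n)
    then have "I n \<noteq> {}" by auto
    with elim show ?case
      using K var_pos varD_pos \<open>\<epsilon> > 0\<close>
      by (intro simulated_population.prob_relative_error_le[OF pop, where e=\<epsilon> and K=K and C=C]) auto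
  qed
  have "?accounts \<longlonglongrightarrow> 0"
    using card_inf filterlim_real_sequentially
    by (intro tendsto_divide_0[OF tendsto_const] filterlim_at_top_imp_at_infinity)
      (auto intro: filterlim_compose)
  moreover have "RD n > 0" for n using RD2[of n] by simp
  then have "?block \<longlonglongrightarrow> 0"
    by (intro tendsto_mult_right_zero block_ratio_tendsto_0[OF _ block])
  ultimately show "(\<lambda>n. measure (M n) {\<omega> \<in> space (M n).
      \<bar>sigma2_hat (I n) (D n) (R n) (RD n) (Xs n) (XsD n) \<omega>
       / var (M n) (\<lambda>\<omega>. X_tot (I n) (D n) (X n) \<omega> - mu_hat (I n) (D n) (R n) (RD n) (Xs n) (XsD n) \<omega>) - 1\<bar> > \<epsilon>})
      \<longlonglongrightarrow> 0"
    by (intro tendsto_sandwich[OF _ bound tendsto_const tendsto_add_zero]) simp_all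
qed

end
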